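(* Let $n\ge2r\ge4$. If $k>n-r$, then there is no graph $H$ with $\mathsf{TJ}_k(H)\cong J(n,r)$; that is, $k\notin\mathcal{K}^{\mathsf{TJ}}(J(n,r))$.
   Context: All graphs are finite, simple, undirected. A $k$-clique of a graph $H$ is a set of $k$ pairwise adjacent vertices. For a graph $H$ and integer $k\ge1$, the Token Jumping graph $\mathsf{TJ}_k(H)$ has as vertices the $k$-cliques of $H$, and two $k$-cliques $A,B$ are adjacent iff $|A\cap B|=k-1$. $\mathcal{K}^{\mathsf{TJ}}(G)=\{k\ge1:\ \exists H,\ \mathsf{TJ}_k(H)\cong G\}$. The Johnson graph $J(n,r)$ has as vertices the $r$-subsets of $\{1,\dots,n\}$, two being adjacent iff their intersection has size $r-1$. *)

theory Defs
  imports Main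
begin

definition simple_graph :: "'a set \<Rightarrow> ('a \<Rightarrow> 'a \<Rightarrow> bool) \<Rightarrow> bool" where
  "simple_graph V E \<longleftrightarrow> finite V \<and> (\<forall>x y. E x y \<longrightarrow> x \<in> V \<and> y \<in> V)
     \<and> (\<forall>x y. E x y \<longrightarrow> E y x) \<and> (\<forall>x. \<not> E x x)"

definition cliques :: "'a set \<Rightarrow> ('a \<Rightarrow> 'a \<Rightarrow> bool) \<Rightarrow> nat \<Rightarrow> 'a set set" where
  "cliques V E k = {A. A \<subseteq> V \<and> card A = k \<and> (\<forall>x\<in>A. \<forall>y\<in>A. x \<noteq> y \<longrightarrow> E x y)}"

definition TJ_verts :: "'a set \<Rightarrow> ('a \<Rightarrow> 'a \<Rightarrow> bool) \<Rightarrow> nat \<Rightarrow> 'a set set" where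
  "TJ_verts V E k = cliques V E k"

definition TJ_adj :: "'a set \<Rightarrow> ('a \<Rightarrow> 'a \<Rightarrow> bool) \<Rightarrow> nat \<Rightarrow> 'a set \<Rightarrow> 'a set \<Rightarrow> bool" where
  "TJ_adj V E k A B \<longleftrightarrow> A \<in> cliques V E k \<and> B \<in> cliques V E k \<and> card (A \<inter> B) = k - 1"

definition johnson_verts :: "nat \<Rightarrow> nat \<Rightarrow> nat set set" where
  "johnson_verts n r = {A. A \<subseteq> {1..n} \<and> card A = r}"

definition johnson_adj :: "nat \<Rightarrow> nat \<Rightarrow> nat set \<Rightarrow> nat set \<Rightarrow> bool" where
  "johnson_adj n r A B \<longleftrightarrow> A \<in> johnson_verts n r \<and> B \<in> johnson_verts n r \<and> card (A \<inter> B) = r - 1"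

definition graph_iso :: "'a set \<Rightarrow> ('a \<Rightarrow> 'a \<Rightarrow> bool) \<Rightarrow> 'b set \<Rightarrow> ('b \<Rightarrow> 'b \<Rightarrow> bool) \<Rightarrow> bool" where
  "graph_iso V1 E1 V2 E2 \<longleftrightarrow> (\<exists>f. bij_betw f V1 V2 \<and> (\<forall>x\<in>V1. \<forall>y\<in>V1. E1 x y \<longleftrightarrow> E2 (f x) (f y)))"

end

(*
  Let A, B be adjacent vertices of TJ_k(H). A common neighbour of A and B is either
  (A \<inter> B) + z with z outside A \<union> B, or (A \<union> B) - s with s \<in> A \<inter> B, and the second
  kind exists only if A \<union> B is a (k+1)-clique. Neighbours of the first kind are pairwise
  adjacent, neighbours of different kinds never are. Hence: if the common neighbourhood of
  A and B is not a clique, then A \<union> B is a (k+1)-clique and the k - 1 sets (A \<union> B) - s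
  form a clique in it; and every clique among common neighbours has at most
  max (|V(H)| - k - 1) (k - 1) elements.
  Now J(n,r) = TJ_r(K_n). For r \<ge> 2 it has adjacent vertices whose common neighbourhood
  is not a clique, so an isomorphism with TJ_k(H) produces a clique of size k - 1 among
  common neighbours in J(n,r), whereas the bound gives at most max (n - r - 1) (r - 1) =
  n - r - 1 there. Thus k \<le> n - r.
*)

theory Submission
  imports Defs
begin

definition common_nbrs :: "'a set \<Rightarrow> ('a \<Rightarrow> 'a \<Rightarrow> bool) \<Rightarrow> 'a \<Rightarrow> 'a \<Rightarrow> 'a set" where
  "common_nbrs V adj x y = {z \<in> V. adj x z \<and> adj y z}"

definition is_clique :: "('a \<Rightarrow> 'a \<Rightarrow> bool) \<Rightarrow> 'a set \<Rightarrow> bool" where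
  "is_clique adj C \<longleftrightarrow> (\<forall>x\<in>C. \<forall>y\<in>C. x \<noteq> y \<longrightarrow> adj x y)"

definition nonclique_common_nbrs :: "'a set \<Rightarrow> ('a \<Rightarrow> 'a \<Rightarrow> bool) \<Rightarrow> bool" where
  "nonclique_common_nbrs V adj \<longleftrightarrow>
     (\<exists>x\<in>V. \<exists>y\<in>V. adj x y \<and> \<not> is_clique adj (common_nbrs V adj x y))"

definition common_nbrs_clique :: "'a set \<Rightarrow> ('a \<Rightarrow> 'a \<Rightarrow> bool) \<Rightarrow> nat \<Rightarrow> bool" where
  "common_nbrs_clique V adj m \<longleftrightarrow>
     (\<exists>x\<in>V. \<exists>y\<in>V. adj x y \<and> (\<exists>C \<subseteq> common_nbrs V adj x y. is_clique adj C \<and> card C = m))"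

lemma graph_iso_sym:
  assumes "graph_iso V1 E1 V2 E2"
  shows "graph_iso V2 E2 V1 E1"
proof -
  obtain f where f: "bij_betw f V1 V2" "\<forall>x\<in>V1. \<forall>y\<in>V1. E1 x y \<longleftrightarrow> E2 (f x) (f y)"
    using assms unfolding graph_iso_def by blast
  have g: "bij_betw (inv_into V1 f) V2 V1"
    using f(1) by (rule bij_betw_inv_into)
  moreover have "E2 x y \<longleftrightarrow> E1 (inv_into V1 f x) (inv_into V1 f y)" if "x \<in> V2" "y \<in> V2" for x y
  proof -
    have "inv_into V1 f x \<in> V1" "inv_into V1 f y \<in> V1"
      using g that by (simp_all add: bij_betwE)
    then show ?thesis
      using f that by (simp add: bij_betw_inv_into_right)
  qed
  ultimately show ?thesis
    unfolding graph_iso_def by blast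
qed

lemma iso_image_common_nbrs:
  assumes f: "bij_betw f V1 V2" "\<forall>x\<in>V1. \<forall>y\<in>V1. E1 x y \<longleftrightarrow> E2 (f x) (f y)"
    and "x \<in> V1" "y \<in> V1"
  shows "f ` common_nbrs V1 E1 x y = common_nbrs V2 E2 (f x) (f y)"
proof -
  have "f ` {z \<in> V1. E1 x z \<and> E1 y z} = {w \<in> f ` V1. E2 (f x) w \<and> E2 (f y) w}"
    using assms by auto
  then show ?thesis
    using f(1) unfolding common_nbrs_def bij_betw_def by simp
qed

lemma iso_is_clique_image:
  assumes f: "bij_betw f V1 V2" "\<forall>x\<in>V1. \<forall>y\<in>V1. E1 x y \<longleftrightarrow> E2 (f x) (f y)"
    and "C \<subseteq> V1"
  shows "is_clique E2 (f ` C) \<longleftrightarrow> is_clique E1 C"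
proof -
  have "E2 (f x) (f y) \<longleftrightarrow> E1 x y" and "f x \<noteq> f y \<longleftrightarrow> x \<noteq> y" if "x \<in> C" "y \<in> C" for x y
    using assms that unfolding bij_betw_def inj_on_def by blast+
  then show ?thesis
    unfolding is_clique_def by blast
qed

lemma graph_iso_nonclique_common_nbrs:
  assumes "graph_iso V1 E1 V2 E2" "nonclique_common_nbrs V1 E1"
  shows "nonclique_common_nbrs V2 E2"
proof -
  obtain f where f: "bij_betw f V1 V2" "\<forall>x\<in>V1. \<forall>y\<in>V1. E1 x y \<longleftrightarrow> E2 (f x) (f y)"
    using assms(1) unfolding graph_iso_def by blast
  obtain x y where xy: "x \<in> V1" "y \<in> V1" "E1 x y" "\<not> is_clique E1 (common_nbrs V1 E1 x y)"
    using assms(2) unfolding nonclique_common_nbrs_def by blast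
  have "common_nbrs V1 E1 x y \<subseteq> V1"
    unfolding common_nbrs_def by blast
  then have "\<not> is_clique E2 (common_nbrs V2 E2 (f x) (f y))"
    using xy iso_is_clique_image[OF f] iso_image_common_nbrs[OF f] by metis
  moreover have "f x \<in> V2" "f y \<in> V2" "E2 (f x) (f y)"
    using f xy by (auto simp: bij_betw_def)
  ultimately show ?thesis
    unfolding nonclique_common_nbrs_def by blast
qed

lemma graph_iso_common_nbrs_clique:
  assumes "graph_iso V1 E1 V2 E2" "common_nbrs_clique V1 E1 m"
  shows "common_nbrs_clique V2 E2 m"
proof -
  obtain f where f: "bij_betw f V1 V2" "\<forall>x\<in>V1. \<forall>y\<in>V1. E1 x y \<longleftrightarrow> E2 (f x) (f y)"
    using assms(1) unfolding graph_iso_def by blast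
  obtain x y C where xy: "x \<in> V1" "y \<in> V1" "E1 x y"
    and C: "C \<subseteq> common_nbrs V1 E1 x y" "is_clique E1 C" "card C = m"
    using assms(2) unfolding common_nbrs_clique_def by blast
  have CV: "C \<subseteq> V1"
    using C(1) unfolding common_nbrs_def by blast
  have "f ` C \<subseteq> common_nbrs V2 E2 (f x) (f y)"
    using C(1) iso_image_common_nbrs[OF f xy(1,2)] by blast
  moreover have "is_clique E2 (f ` C)"
    using C(2) iso_is_clique_image[OF f CV] by blast
  moreover have "card (f ` C) = m"
    using C(3) CV f(1) by (metis bij_betw_def card_image inj_on_subset)
  moreover have "f x \<in> V2" "f y \<in> V2" "E2 (f x) (f y)"
    using f xy by (auto simp: bij_betw_def)
  ultimately show ?thesis
    unfolding common_nbrs_clique_def by blast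
qed

lemma TJ_adj_card:
  assumes "TJ_adj V E k A B" "k \<ge> 1"
  shows "finite A" "finite B" "card A = k" "card B = k" "card (A \<inter> B) = k - 1"
    "card (A \<union> B) = k + 1"
proof -
  have c: "card A = k" "card B = k" "card (A \<inter> B) = k - 1"
    using assms(1) unfolding TJ_adj_def cliques_def by auto
  then show "finite A" "finite B"
    using assms(2) card.infinite by fastforce+
  then show "card A = k" "card B = k" "card (A \<inter> B) = k - 1" "card (A \<union> B) = k + 1"
    using c card_Un_Int[of A B] assms(2) by auto
qed

lemma Un_in_cliques_if_Diff_in_cliques:
  assumes AB: "TJ_adj V E k A B" and k: "k \<ge> 1" and s: "s \<in> A \<inter> B"
    and "(A \<union> B) - {s} \<in> cliques V E k"
  shows "A \<union> B \<in> cliques V E (k + 1)"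
proof -
  have "E x y" if "x \<in> A \<union> B" "y \<in> A \<union> B" "x \<noteq> y" for x y
  proof (cases "x = s \<or> y = s")
    case True
    then show ?thesis
      using AB that s unfolding TJ_adj_def cliques_def by blast
  next
    case False
    then show ?thesis
      using assms(4) that unfolding cliques_def by blast
  qed
  then show ?thesis
    using AB TJ_adj_card[OF AB k] unfolding TJ_adj_def cliques_def by auto
qed

lemma TJ_common_nbr_cases:
  assumes AB: "TJ_adj V E k A B" and AW: "TJ_adj V E k A W" and BW: "TJ_adj V E k B W"
    and k: "k \<ge> 1"
  obtains z where "z \<in> V - (A \<union> B)" "W = insert z (A \<inter> B)"
  | s where "s \<in> A \<inter> B" "W = (A \<union> B) - {s}" "A \<union> B \<in> cliques V E (k + 1)"
proof -
  note AB_card = TJ_adj_card[OF AB k] and AW_card = TJ_adj_card[OF AW k]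
    and BW_card = TJ_adj_card[OF BW k]
  have W: "W \<subseteq> V"
    using AW unfolding TJ_adj_def cliques_def by auto
  show thesis
  proof (cases "A \<inter> B \<subseteq> W")
    case True
    have "A \<inter> W = A \<inter> B" "B \<inter> W = A \<inter> B"
      using True AB_card AW_card BW_card by (intro card_subset_eq[symmetric]; auto)+
    moreover have "card (W - A \<inter> B) = 1"
      using True AB_card AW_card k by (simp add: card_Diff_subset finite_subset)
    then obtain z where z: "W - A \<inter> B = {z}"
      using card_1_singletonE by blast
    ultimately show thesis
      using that(1)[of z] True W by blast
  next
    case False
    then obtain s where s: "s \<in> A \<inter> B" "s \<notin> W"
      by blast
    have "A \<inter> W = A - {s}" "B \<inter> W = B - {s}"
      using s AB_card AW_card BW_card by (intro card_subset_eq; auto)+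
    then have sub: "(A \<union> B) - {s} \<subseteq> W"
      by blast
    have "card ((A \<union> B) - {s}) = k"
      using AB_card s by (simp add: card_Diff_singleton)
    then have W_eq: "W = (A \<union> B) - {s}"
      using card_subset_eq[OF AW_card(2) sub] AW_card by simp
    have "A \<union> B \<in> cliques V E (k + 1)"
      using Un_in_cliques_if_Diff_in_cliques[OF AB k s(1)] AW W_eq unfolding TJ_adj_def by blast
    then show thesis
      using that(2) s(1) W_eq by blast
  qed
qed

lemma mem_TJ_common_nbrs:
  "W \<in> common_nbrs (TJ_verts V E k) (TJ_adj V E k) A B \<longleftrightarrow> TJ_adj V E k A W \<and> TJ_adj V E k B W"
  unfolding common_nbrs_def TJ_verts_def TJ_adj_def by auto

lemma Diff_singleton_in_cliques:
  assumes "U \<in> cliques V E (k + 1)" "s \<in> U"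
  shows "U - {s} \<in> cliques V E k"
proof -
  have "finite U"
    using assms(1) card.infinite unfolding cliques_def by fastforce
  then show ?thesis
    using assms unfolding cliques_def by auto
qed

lemma TJ_adj_insert_insert:
  assumes "insert x S \<in> cliques V E k" "insert y S \<in> cliques V E k" "x \<noteq> y" "card S = k - 1"
  shows "TJ_adj V E k (insert x S) (insert y S)"
proof -
  have "insert x S \<inter> insert y S = S"
    using assms(3) by blast
  then show ?thesis
    using assms unfolding TJ_adj_def by simp
qed

lemma TJ_adj_Diff_Diff:
  assumes "U \<in> cliques V E (k + 1)" "s \<in> U" "t \<in> U" "s \<noteq> t"
  shows "TJ_adj V E k (U - {s}) (U - {t})"
proof -
  have "finite U" "card U = k + 1"
    using assms(1) card.infinite unfolding cliques_def by fastforce+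
  moreover have "(U - {s}) \<inter> (U - {t}) = U - {s, t}"
    by blast
  ultimately have "card ((U - {s}) \<inter> (U - {t})) = k - 1"
    using assms(2-4) by (simp add: card_Diff_subset)
  then show ?thesis
    using Diff_singleton_in_cliques[OF assms(1)] assms(2,3) unfolding TJ_adj_def by blast
qed

lemma TJ_not_adj_insert_Diff:
  assumes "TJ_adj V E k A B" "k \<ge> 1" "z \<notin> A \<union> B" "s \<in> A \<inter> B"
  shows "\<not> TJ_adj V E k (insert z (A \<inter> B)) ((A \<union> B) - {s})"
proof -
  note AB_card = TJ_adj_card[OF assms(1,2)]
  have "insert z (A \<inter> B) \<inter> ((A \<union> B) - {s}) = (A \<inter> B) - {s}"
    using assms(3) by blast
  then have "card (insert z (A \<inter> B) \<inter> ((A \<union> B) - {s})) = card (A \<inter> B) - 1"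
    using assms(4) by simp
  moreover have "card (A \<inter> B) \<noteq> 0"
    using AB_card assms(4) by auto
  ultimately show ?thesis
    using AB_card(5) unfolding TJ_adj_def by linarith
qed

lemma TJ_Un_clique_if_nonclique_common_nbrs:
  assumes AB: "TJ_adj V E k A B" and k: "k \<ge> 1"
    and nonclique: "\<not> is_clique (TJ_adj V E k) (common_nbrs (TJ_verts V E k) (TJ_adj V E k) A B)"
  shows "A \<union> B \<in> cliques V E (k + 1)"
proof (rule ccontr)
  assume no_clique: "A \<union> B \<notin> cliques V E (k + 1)"
  obtain W1 W2 where "W1 \<in> common_nbrs (TJ_verts V E k) (TJ_adj V E k) A B"
    "W2 \<in> common_nbrs (TJ_verts V E k) (TJ_adj V E k) A B" "W1 \<noteq> W2" "\<not> TJ_adj V E k W1 W2"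
    using nonclique unfolding is_clique_def by blast
  then have W: "TJ_adj V E k A W1" "TJ_adj V E k B W1"
    "TJ_adj V E k A W2" "TJ_adj V E k B W2" "W1 \<noteq> W2" "\<not> TJ_adj V E k W1 W2"
    unfolding mem_TJ_common_nbrs by blast+
  obtain z1 where z1: "W1 = insert z1 (A \<inter> B)"
    using TJ_common_nbr_cases[OF AB W(1,2) k] no_clique by blast
  obtain z2 where z2: "W2 = insert z2 (A \<inter> B)"
    using TJ_common_nbr_cases[OF AB W(3,4) k] no_clique by blast
  have "W1 \<in> cliques V E k" "W2 \<in> cliques V E k"
    using W(1,3) unfolding TJ_adj_def by blast+
  moreover have "z1 \<noteq> z2"
    using W(5) z1 z2 by blast
  ultimately have "TJ_adj V E k W1 W2"
    unfolding z1 z2 by (rule TJ_adj_insert_insert) (rule TJ_adj_card(5)[OF AB k])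
  with W(6) show False ..
qed

lemma TJ_common_nbrs_clique_if_Un_clique:
  assumes AB: "TJ_adj V E k A B" and k: "k \<ge> 1" and U: "A \<union> B \<in> cliques V E (k + 1)"
  shows "\<exists>C \<subseteq> common_nbrs (TJ_verts V E k) (TJ_adj V E k) A B.
           is_clique (TJ_adj V E k) C \<and> card C = k - 1"
proof (intro exI conjI)
  note AB_card = TJ_adj_card[OF AB k]
  let ?C = "(\<lambda>s. (A \<union> B) - {s}) ` (A \<inter> B)"
  show "?C \<subseteq> common_nbrs (TJ_verts V E k) (TJ_adj V E k) A B"
  proof
    fix W
    assume "W \<in> ?C"
    then obtain s where s: "s \<in> A \<inter> B" "W = (A \<union> B) - {s}"
      by blast
    have "A \<inter> W = A - {s}" "B \<inter> W = B - {s}"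
      using s by auto
    moreover have "card (A - {s}) = k - 1" "card (B - {s}) = k - 1"
      using s AB_card by auto
    moreover have "W \<in> cliques V E k"
      using Diff_singleton_in_cliques[OF U] s by blast
    ultimately show "W \<in> common_nbrs (TJ_verts V E k) (TJ_adj V E k) A B"
      using AB unfolding mem_TJ_common_nbrs TJ_adj_def by (simp add: Int_commute)
  qed
  show "is_clique (TJ_adj V E k) ?C"
    unfolding is_clique_def using TJ_adj_Diff_Diff[OF U] by blast
  have "inj_on (\<lambda>s. (A \<union> B) - {s}) (A \<inter> B)"
    unfolding inj_on_def by blast
  then show "card ?C = k - 1"
    using AB_card by (simp add: card_image)
qed

lemma card_clique_TJ_common_nbrs_le:
  assumes V: "finite V" and AB: "TJ_adj V E k A B" and k: "k \<ge> 1"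
    and C: "C \<subseteq> common_nbrs (TJ_verts V E k) (TJ_adj V E k) A B" "is_clique (TJ_adj V E k) C"
  shows "card C \<le> max (card (V - (A \<union> B))) (card (A \<inter> B))"
proof (cases "\<forall>W\<in>C. \<exists>z \<in> V - (A \<union> B). W = insert z (A \<inter> B)")
  case True
  then have "C \<subseteq> (\<lambda>z. insert z (A \<inter> B)) ` (V - (A \<union> B))"
    by blast
  then have "card C \<le> card (V - (A \<union> B))"
    using V by (simp add: surj_card_le)
  then show ?thesis
    by simp
next
  case False
  have cases: "(\<exists>z \<in> V - (A \<union> B). W = insert z (A \<inter> B)) \<or> (\<exists>s \<in> A \<inter> B. W = (A \<union> B) - {s})"
    if "W \<in> C" for W
  proof -
    have "TJ_adj V E k A W" "TJ_adj V E k B W"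
      using C(1) that mem_TJ_common_nbrs by blast+
    then show ?thesis
      by (cases rule: TJ_common_nbr_cases[OF AB _ _ k]) blast+
  qed
  from False obtain W0 where W0: "W0 \<in> C" "\<not> (\<exists>z \<in> V - (A \<union> B). W0 = insert z (A \<inter> B))"
    by blast
  with cases obtain s0 where s0: "s0 \<in> A \<inter> B" "W0 = (A \<union> B) - {s0}"
    by blast
  have "C \<subseteq> (\<lambda>s. (A \<union> B) - {s}) ` (A \<inter> B)"
  proof
    fix W
    assume W: "W \<in> C"
    have "\<not> (\<exists>z \<in> V - (A \<union> B). W = insert z (A \<inter> B))"
    proof (cases "W = W0")
      case False
      then have "TJ_adj V E k W W0"
        using C(2) W W0(1) unfolding is_clique_def by blast
      then show ?thesis
        using TJ_not_adj_insert_Diff[OF AB k _ s0(1)] s0(2) by blast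
    qed (use W0(2) in simp)
    then show "W \<in> (\<lambda>s. (A \<union> B) - {s}) ` (A \<inter> B)"
      using cases[OF W] by blast
  qed
  then have "card C \<le> card (A \<inter> B)"
    using TJ_adj_card(1)[OF AB k] by (simp add: surj_card_le)
  then show ?thesis
    by simp
qed

definition complete_adj :: "'a set \<Rightarrow> 'a \<Rightarrow> 'a \<Rightarrow> bool" where
  "complete_adj S x y \<longleftrightarrow> x \<in> S \<and> y \<in> S \<and> x \<noteq> y"

lemma johnson_verts_eq_TJ_verts:
  "johnson_verts n r = TJ_verts {1..n} (complete_adj {1..n}) r"
  unfolding johnson_verts_def TJ_verts_def cliques_def complete_adj_def by blast

lemma johnson_adj_eq_TJ_adj:
  "johnson_adj n r = TJ_adj {1..n} (complete_adj {1..n}) r"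
  using johnson_verts_eq_TJ_verts[of n r]
  by (intro ext) (simp add: johnson_adj_def TJ_adj_def TJ_verts_def)

lemma johnson_common_nbrs_clique_le:
  assumes "common_nbrs_clique (johnson_verts n r) (johnson_adj n r) m" "r \<ge> 1" "2 * r \<le> n"
  shows "m \<le> n - r - 1"
proof -
  let ?K = "complete_adj {1..n}"
  obtain X Y C where XY: "TJ_adj {1..n} ?K r X Y"
    and C: "C \<subseteq> common_nbrs (TJ_verts {1..n} ?K r) (TJ_adj {1..n} ?K r) X Y"
      "is_clique (TJ_adj {1..n} ?K r) C" "card C = m"
    using assms(1) unfolding common_nbrs_clique_def johnson_verts_eq_TJ_verts johnson_adj_eq_TJ_adj
    by blast
  note XY_card = TJ_adj_card[OF XY assms(2)]
  have "X \<union> Y \<subseteq> {1..n}"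
    using XY unfolding TJ_adj_def cliques_def by auto
  then have "card ({1..n} - (X \<union> Y)) = n - (r + 1)"
    using XY_card by (simp add: card_Diff_subset)
  moreover have "m \<le> max (card ({1..n} - (X \<union> Y))) (card (X \<inter> Y))"
    using card_clique_TJ_common_nbrs_le[OF _ XY assms(2) C(1,2)] C(3) by simp
  ultimately show ?thesis
    using XY_card(5) assms(3) by linarith
qed

lemma johnson_nonclique_common_nbrs:
  assumes "r \<ge> 2" "r + 2 \<le> n"
  shows "nonclique_common_nbrs (johnson_verts n r) (johnson_adj n r)"
proof -
  define X Y W1 W2 where "X = {1..r}" and "Y = {2..r + 1}"
    and "W1 = insert (r + 2) {2..r}" and "W2 = insert 1 {3..r + 1}"
  have verts: "X \<in> johnson_verts n r" "Y \<in> johnson_verts n r"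
    "W1 \<in> johnson_verts n r" "W2 \<in> johnson_verts n r"
    unfolding johnson_verts_def X_def Y_def W1_def W2_def using assms by auto
  have "X \<inter> Y = {2..r}" "X \<inter> W1 = {2..r}" "Y \<inter> W1 = {2..r}"
    "X \<inter> W2 = insert 1 {3..r}" "Y \<inter> W2 = {3..r + 1}" "W1 \<inter> W2 = {3..r}"
    unfolding X_def Y_def W1_def W2_def using assms by auto
  then have "johnson_adj n r X Y" "johnson_adj n r X W1" "johnson_adj n r Y W1"
    "johnson_adj n r X W2" "johnson_adj n r Y W2" "\<not> johnson_adj n r W1 W2"
    unfolding johnson_adj_def using verts assms by simp_all
  moreover have "W1 \<noteq> W2"
    unfolding W1_def W2_def by auto
  ultimately show ?thesis
    unfolding nonclique_common_nbrs_def is_clique_def common_nbrs_def using verts by blast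
qed

theorem theorem4p22:
  fixes n r k :: nat and V :: "'a set" and E :: "'a \<Rightarrow> 'a \<Rightarrow> bool"
  assumes "4 \<le> 2 * r" and "2 * r \<le> n"
    and "k \<ge> 1" and "k > n - r"
    and "simple_graph V E"
  shows "\<not> graph_iso (TJ_verts V E k) (TJ_adj V E k) (johnson_verts n r) (johnson_adj n r)"
proof
  assume iso: "graph_iso (TJ_verts V E k) (TJ_adj V E k) (johnson_verts n r) (johnson_adj n r)"
  have "nonclique_common_nbrs (johnson_verts n r) (johnson_adj n r)"
    using assms(1,2) by (intro johnson_nonclique_common_nbrs) auto
  then obtain A B where AB: "TJ_adj V E k A B"
    and nonclique: "\<not> is_clique (TJ_adj V E k) (common_nbrs (TJ_verts V E k) (TJ_adj V E k) A B)"
    using graph_iso_nonclique_common_nbrs[OF graph_iso_sym[OF iso]]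
    unfolding nonclique_common_nbrs_def by blast
  have "A \<union> B \<in> cliques V E (k + 1)"
    using AB assms(3) nonclique by (rule TJ_Un_clique_if_nonclique_common_nbrs)
  then have "common_nbrs_clique (TJ_verts V E k) (TJ_adj V E k) (k - 1)"
    using TJ_common_nbrs_clique_if_Un_clique[OF AB assms(3)] AB
    unfolding common_nbrs_clique_def TJ_adj_def TJ_verts_def by blast
  then have "k - 1 \<le> n - r - 1"
    using graph_iso_common_nbrs_clique[OF iso] johnson_common_nbrs_clique_le assms(1,2) by simp
  with assms(1,2,4) show False
    by linarith
qed

end
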